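(* Let $(w_k)_{k\ge0}$ and $(z_k)_{k\ge0}$ be sequences of real numbers, and let $J$ be the infinite matrix \[ J=\begin{bmatrix} w_0&z_0&&&&&\\ w_1&z_1&1&&&&\\ w_2&z_2&0&1&&&\\ w_3&z_3&0&0&1&&\\ w_4&z_4&0&0&0&1&\\ \vdots&\vdots&&&&&\ddots \end{bmatrix}, \] i.e. $J_{i,0}=w_i$, $J_{i,1}=z_i$ for $i\ge0$, $J_{i,i+1}=1$ for $i\ge1$, and all other entries are $0$. Then $J$ is totally positive if and only if both of the following hold: (1) $w_k=z_k=0$ for all $k\ge2$, and $w_0,w_1,z_0,z_1\ge0$; (2) $w_0z_1-w_1z_0\ge0$.
   Context: An infinite matrix is totally positive (TP) if all its minors (of all orders) are nonnegative. *)

theory Defs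
  imports Complex_Main "Jordan_Normal_Form.Determinant"
begin

text \<open>An infinite real matrix is a function nat => nat => real (row index first).
  The minor with row indices r 0 < ... < r (k-1) and column indices c 0 < ... < c (k-1).\<close>
definition inf_minor :: "(nat \<Rightarrow> nat \<Rightarrow> real) \<Rightarrow> nat \<Rightarrow> (nat \<Rightarrow> nat) \<Rightarrow> (nat \<Rightarrow> nat) \<Rightarrow> real" where
  "inf_minor A k r c = det (mat k k (\<lambda>(i, j). A (r i) (c j)))"

definition totally_positive :: "(nat \<Rightarrow> nat \<Rightarrow> real) \<Rightarrow> bool" where
  "totally_positive A \<longleftrightarrow>
     (\<forall>k r c. k \<ge> 1 \<longrightarrow> strict_mono_on {..<k} r \<longrightarrow> strict_mono_on {..<k} c \<longrightarrow>
        inf_minor A k r c \<ge> 0)"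

definition Jmat :: "(nat \<Rightarrow> real) \<Rightarrow> (nat \<Rightarrow> real) \<Rightarrow> nat \<Rightarrow> nat \<Rightarrow> real" where
  "Jmat w z i j = (if j = 0 then w i else if j = 1 then z i
                   else if i \<ge> 1 \<and> j = i + 1 then 1 else 0)"

end

theory Submission
  imports Defs
begin

(* Once the rows k >= 2 vanish in the first two columns, every row r >= 2 of J has its only
   nonzero entry in column r + 1 and every column c >= 2 its only one in row c - 1. Hence
   expanding along the last row or column reduces each minor of order k + 1 to its
   bottom-right entry times its leading minor of order k, with the single exception of the
   minor on rows and columns {0, 1}, which is w0 z1 - w1 z0. Conversely, the 2x2 minors on
   rows 1, k and columns (0, 2) resp. (1, 2) equal -w k resp. -z k. *)

lemma det_mat_2:
  "det (mat 2 2 f) = (f (0,0) * f (1,1) - f (0,1) * f (1,0) :: 'a::comm_ring_1)"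
proof -
  let ?A = "mat 2 2 f"
  have "det ?A = (\<Sum>j<2. ?A $$ (0,j) * cofactor ?A 0 j)"
    by (rule laplace_expansion_row) auto
  also have "\<dots> = f (0,0) * det (mat_delete ?A 0 0) - f (0,1) * det (mat_delete ?A 0 1)"
    by (simp add: cofactor_def numeral_2_eq_2)
  also have "det (mat_delete ?A 0 0) = f (1,1)"
    by (subst det_single) (auto simp: mat_delete_def)
  also have "det (mat_delete ?A 0 1) = f (1,0)"
    by (subst det_single) (auto simp: mat_delete_def)
  finally show ?thesis .
qed

lemma inf_minor_transpose: "inf_minor A k r c = inf_minor (\<lambda>i j. A j i) k c r"
proof -
  have "mat k k (\<lambda>(i, j). A (r i) (c j)) = transpose_mat (mat k k (\<lambda>(i, j). A (r j) (c i)))"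
    by (rule eq_matI) auto
  then show ?thesis
    unfolding inf_minor_def by (metis det_transpose mat_carrier)
qed

lemma inf_minor_last_row:
  assumes "\<And>j. j < k \<Longrightarrow> A (r k) (c j) = 0"
  shows "inf_minor A (Suc k) r c = A (r k) (c k) * inf_minor A k r c"
proof -
  define M where "M = mat (Suc k) (Suc k) (\<lambda>(i, j). A (r i) (c j))"
  have "det M = (\<Sum>j<Suc k. M $$ (k,j) * cofactor M k j)"
    by (rule laplace_expansion_row) (auto simp: M_def)
  also have "\<dots> = M $$ (k,k) * cofactor M k k"
    by (subst sum.lessThan_Suc) (simp add: M_def assms)
  also have "cofactor M k k = inf_minor A k r c"
  proof -
    have "mat_delete M k k = mat k k (\<lambda>(i, j). A (r i) (c j))"
      by (rule eq_matI) (auto simp: M_def mat_delete_def)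
    then show ?thesis by (simp add: cofactor_def inf_minor_def)
  qed
  finally show ?thesis
    by (simp add: inf_minor_def M_def)
qed

lemma inf_minor_last_col:
  assumes "\<And>i. i < k \<Longrightarrow> A (r i) (c k) = 0"
  shows "inf_minor A (Suc k) r c = A (r k) (c k) * inf_minor A k r c"
  using inf_minor_last_row[of k "\<lambda>i j. A j i" c r] assms
  by (simp add: inf_minor_transpose[of A])

lemma inf_minor_2:
  "inf_minor A 2 r c = A (r 0) (c 0) * A (r 1) (c 1) - A (r 0) (c 1) * A (r 1) (c 0)"
  by (simp add: inf_minor_def det_mat_2)

lemma totally_positive_nonneg:
  assumes "totally_positive A"
  shows "0 \<le> A i j"
proof -
  have "strict_mono_on {..<1} f" for f :: "nat \<Rightarrow> nat"
    by (rule strict_mono_onI) simp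
  then have "0 \<le> inf_minor A 1 (\<lambda>_. i) (\<lambda>_. j)"
    using assms unfolding totally_positive_def by blast
  then show ?thesis
    using inf_minor_last_row[of 0 A "\<lambda>_. i" "\<lambda>_. j"] by (simp add: inf_minor_def)
qed

lemma totally_positive_minor_2_nonneg:
  assumes "totally_positive A" "i0 < i1" "j0 < j1"
  shows "0 \<le> A i0 j0 * A i1 j1 - A i0 j1 * A i1 j0"
proof -
  let ?r = "\<lambda>i. if i = 0 then i0 else i1" and ?c = "\<lambda>j. if j = 0 then j0 else j1"
  have "0 \<le> inf_minor A 2 ?r ?c"
    using assms unfolding totally_positive_def by (auto simp: strict_mono_on_def)
  then show ?thesis by (simp add: inf_minor_2)
qed

lemma strict_mono_on_lessThan_imp_increasing:
  fixes f :: "nat \<Rightarrow> nat"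
  assumes "strict_mono_on {..<n} f" "i < n"
  shows "i \<le> f i"
  using assms(2)
proof (induction i)
  case (Suc i)
  then show ?case
    using strict_mono_onD[OF assms(1), of i "Suc i"] by simp
qed simp

lemma Jmat_nonneg:
  assumes "\<And>k. 0 \<le> w k" "\<And>k. 0 \<le> z k"
  shows "0 \<le> Jmat w z i j"
  using assms by (simp add: Jmat_def)

lemma inf_minor_Jmat_Suc:
  assumes vanish: "\<forall>k\<ge>2. w k = 0 \<and> z k = 0"
    and r: "strict_mono_on {..<Suc k} r" and c: "strict_mono_on {..<Suc k} c"
    and not_leading: "\<not> (k = 1 \<and> r 1 = 1 \<and> c 1 = 1)"
  shows "inf_minor (Jmat w z) (Suc k) r c = Jmat w z (r k) (c k) * inf_minor (Jmat w z) k r c"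
proof -
  have r_less: "r i < r k" if "i < k" for i
    using strict_mono_onD[OF r] that by simp
  have c_less: "c j < c k" if "j < k" for j
    using strict_mono_onD[OF c] that by simp
  have "k \<le> r k" "k \<le> c k"
    using strict_mono_on_lessThan_imp_increasing[OF r]
      strict_mono_on_lessThan_imp_increasing[OF c] by auto
  then have "k = 0 \<or> (2 \<le> c k \<and> r k + 1 \<le> c k) \<or> (2 \<le> r k \<and> c k \<le> r k + 1)"
    using not_leading by (cases "k = 1") auto
  then consider (k0) "k = 0" | (col) "2 \<le> c k" "r k + 1 \<le> c k" | (row) "2 \<le> r k" "c k \<le> r k + 1"
    by blast
  then show ?thesis
  proof cases
    case k0
    then show ?thesis by (simp add: inf_minor_last_row)
  next
    case col
    then show ?thesis
      by (intro inf_minor_last_col) (auto simp: Jmat_def dest: r_less)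
  next
    case row
    then show ?thesis
      using vanish by (intro inf_minor_last_row) (auto simp: Jmat_def dest: c_less)
  qed
qed

lemma totally_positive_JmatI:
  assumes vanish: "\<forall>k\<ge>2. w k = 0 \<and> z k = 0"
    and nonneg: "0 \<le> w 0" "0 \<le> w 1" "0 \<le> z 0" "0 \<le> z 1"
    and leading_minor: "0 \<le> w 0 * z 1 - w 1 * z 0"
  shows "totally_positive (Jmat w z)"
proof -
  have "0 \<le> w k" "0 \<le> z k" for k
    using vanish nonneg less_2_cases[of k] by (cases "k \<ge> 2"; fastforce)+
  then have entries: "0 \<le> Jmat w z i j" for i j
    by (rule Jmat_nonneg)
  have "0 \<le> inf_minor (Jmat w z) k r c"
    if "strict_mono_on {..<k} r" "strict_mono_on {..<k} c" for k r c
    using that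
  proof (induction k)
    case 0
    then show ?case by (simp add: inf_minor_def)
  next
    case (Suc k)
    show ?case
    proof (cases "k = 1 \<and> r 1 = 1 \<and> c 1 = 1")
      case True
      then have "r 0 = 0" "c 0 = 0"
        using strict_mono_onD[OF Suc.prems(1), of 0 1] strict_mono_onD[OF Suc.prems(2), of 0 1] by auto
      then have "inf_minor (Jmat w z) (Suc k) r c = w 0 * z 1 - w 1 * z 0"
        using True inf_minor_2[of "Jmat w z" r c] by (simp add: Jmat_def numeral_2_eq_2 mult.commute)
      then show ?thesis
        using leading_minor by simp
    next
      case False
      have "0 \<le> inf_minor (Jmat w z) k r c"
      proof (rule Suc.IH)
        show "strict_mono_on {..<k} r" "strict_mono_on {..<k} c"
          using Suc.prems by (auto intro: monotone_on_subset)
      qed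
      then show ?thesis
        using inf_minor_Jmat_Suc[OF vanish Suc.prems False] entries by simp
    qed
  qed
  then show ?thesis
    unfolding totally_positive_def by blast
qed

theorem theorem3p4:
  fixes w z :: "nat \<Rightarrow> real"
  shows "totally_positive (Jmat w z) \<longleftrightarrow>
    ((\<forall>k\<ge>2. w k = 0 \<and> z k = 0) \<and> w 0 \<ge> 0 \<and> w 1 \<ge> 0 \<and> z 0 \<ge> 0 \<and> z 1 \<ge> 0)
    \<and> w 0 * z 1 - w 1 * z 0 \<ge> 0"
proof
  assume TP: "totally_positive (Jmat w z)"
  note entry = totally_positive_nonneg[OF TP]
    and minor_2 = totally_positive_minor_2_nonneg[OF TP]
  have "w k = 0 \<and> z k = 0" if "2 \<le> k" for k
    using entry[of k 0] entry[of k 1] minor_2[of 1 k 0 2] minor_2[of 1 k 1 2] that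
    by (simp add: Jmat_def)
  then show "((\<forall>k\<ge>2. w k = 0 \<and> z k = 0) \<and> w 0 \<ge> 0 \<and> w 1 \<ge> 0 \<and> z 0 \<ge> 0 \<and> z 1 \<ge> 0)
    \<and> w 0 * z 1 - w 1 * z 0 \<ge> 0"
    using entry[of 0 0] entry[of 1 0] entry[of 0 1] entry[of 1 1] minor_2[of 0 1 0 1]
    by (simp add: Jmat_def mult.commute)
next
  assume "((\<forall>k\<ge>2. w k = 0 \<and> z k = 0) \<and> w 0 \<ge> 0 \<and> w 1 \<ge> 0 \<and> z 0 \<ge> 0 \<and> z 1 \<ge> 0)
    \<and> w 0 * z 1 - w 1 * z 0 \<ge> 0"
  then show "totally_positive (Jmat w z)"
    by (intro totally_positive_JmatI) auto
qed

end
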